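(* Let $S\subseteq M_n$ be a noncommutative graph. Then $\mathcal{H}(S)=1$ if and only if $S=M_n$.
   Context: All scalars are complex; $M_n$ denotes complex $n\times n$ matrices. A noncommutative graph is a linear subspace $S\subseteq M_n$ that contains $I_n$ and is closed under conjugate transpose. For a subspace $S\subseteq M_n$, $M_m(S)$ denotes the set of $m\times m$ block matrices $B=[B_{i,j}]_{i,j\in[m]}$ with every block $B_{i,j}\in S$, viewed as elements of $M_{mn}$. The Haemers bound is $\mathcal{H}(S)=\min\{\mathrm{rk}(B):\ m\in\mathbb{N},\ B\in M_m(S),\ \sum_{i=1}^m B_{i,i}=I_n\}$. *)

theory Defs
  imports "Jordan_Normal_Form.DL_Rank_Submatrix"
begin

definition ctrans :: "complex mat \<Rightarrow> complex mat" where
  "ctrans A = mat (dim_col A) (dim_row A) (\<lambda>(i, j). cnj (A $$ (j, i)))"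

definition nc_graph :: "nat \<Rightarrow> complex mat set \<Rightarrow> bool" where
  "nc_graph n S \<longleftrightarrow>
     S \<subseteq> carrier_mat n n \<and>
     0\<^sub>m n n \<in> S \<and>
     (\<forall>A\<in>S. \<forall>B\<in>S. A + B \<in> S) \<and>
     (\<forall>c::complex. \<forall>A\<in>S. c \<cdot>\<^sub>m A \<in> S) \<and>
     1\<^sub>m n \<in> S \<and>
     (\<forall>A\<in>S. ctrans A \<in> S)"

definition block :: "nat \<Rightarrow> complex mat \<Rightarrow> nat \<Rightarrow> nat \<Rightarrow> complex mat" where
  "block n B i j = mat n n (\<lambda>(a, b). B $$ (i * n + a, j * n + b))"

definition diag_block_sum :: "nat \<Rightarrow> nat \<Rightarrow> complex mat \<Rightarrow> complex mat" where
  "diag_block_sum n m B = mat n n (\<lambda>(a, b). \<Sum>i<m. block n B i i $$ (a, b))"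

definition in_block_space :: "nat \<Rightarrow> nat \<Rightarrow> complex mat set \<Rightarrow> complex mat \<Rightarrow> bool" where
  "in_block_space n m S B \<longleftrightarrow>
     B \<in> carrier_mat (m * n) (m * n) \<and> (\<forall>i<m. \<forall>j<m. block n B i j \<in> S)"

definition crank :: "complex mat \<Rightarrow> nat" where
  "crank B = vec_space.rank (dim_row B) B"

definition haemers :: "nat \<Rightarrow> complex mat set \<Rightarrow> nat" where
  "haemers n S = (LEAST r. \<exists>m B. m \<ge> 1 \<and> in_block_space n m S B \<and>
                                 diag_block_sum n m B = 1\<^sub>m n \<and> crank B = r)"

end

theory Submission
  imports Defs
begin

text \<open>The diagonal blocks of a witness B sum to I, so B is nonzero and the Haemers
  bound is at least 1. If B has rank one, then B = x y^T, so its blocks are u_i w_j^T with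
  \<Sum>_i u_i w_i^T = I. Taking the u_i as the columns of U and the w_j as the rows of W
  gives U W = I, hence every M = U (W M U) W = \<Sum>_ij (W M U)_ij u_i w_j^T is a linear
  combination of blocks of B and lies in S. Conversely, when S = M_n the rank-one matrix
  vec(I) vec(I)^T is a witness.\<close>

lemma det_2x2:
  assumes A: "A \<in> carrier_mat 2 2"
  shows "det A = A $$ (0,0) * A $$ (1,1) - A $$ (0,1) * A $$ (1,0)"
proof -
  have "det A = A $$ (0,0) * cofactor A 0 0 + A $$ (1,0) * cofactor A 1 0"
    using laplace_expansion_column[OF A, of 0] by (simp add: numeral_2_eq_2)
  moreover have "cofactor A 0 0 = A $$ (1,1)" "cofactor A 1 0 = - A $$ (0,1)"
    using A by (simp_all add: cofactor_def det_single mat_delete_carrier mat_delete_def)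
  ultimately show ?thesis by (simp add: algebra_simps)
qed

lemma nonzero_entry_imp_rank_ge_1:
  fixes A :: "'a::field mat"
  assumes A: "A \<in> carrier_mat N M" and r: "r < N" and c: "c < M" and nz: "A $$ (r,c) \<noteq> 0"
  shows "1 \<le> vec_space.rank N A"
proof -
  have rows: "{i. i < dim_row A \<and> i \<in> {r}} = {r}"
    and cols: "{j. j < dim_col A \<and> j \<in> {c}} = {c}"
    using A r c by auto
  have before: "{a\<in>{r}. a < r} = {}" "{a\<in>{c}. a < c} = {}" by auto
  have "submatrix A {r} {c} \<in> carrier_mat 1 1"
    by (intro carrier_matI, unfold dim_submatrix rows cols, simp_all)
  moreover have "submatrix A {r} {c} $$ (0,0) = A $$ (r,c)"
    using submatrix_index_card[of r A c "{r}" "{c}", unfolded before] A r c by simp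
  ultimately have "det (submatrix A {r} {c}) \<noteq> 0" using nz by (simp add: det_single)
  from vec_space.rank_gt_minor[OF A this] show ?thesis
    unfolding cols[unfolded carrier_matD(2)[OF A]] by simp
qed

lemma rank_le_1_ordered_minor_eq:
  fixes A :: "'a::field mat"
  assumes A: "A \<in> carrier_mat N M" and r: "r < r'" "r' < N" and c: "c < c'" "c' < M"
    and rk: "vec_space.rank N A \<le> 1"
  shows "A $$ (r,c) * A $$ (r',c') = A $$ (r,c') * A $$ (r',c)"
proof (rule ccontr)
  assume ne: "A $$ (r,c) * A $$ (r',c') \<noteq> A $$ (r,c') * A $$ (r',c)"
  let ?A2 = "submatrix A {r,r'} {c,c'}"
  have rows: "{i. i < dim_row A \<and> i \<in> {r,r'}} = {r,r'}"
    and cols: "{j. j < dim_col A \<and> j \<in> {c,c'}} = {c,c'}"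
    using A r c by auto
  have before: "{a\<in>{r,r'}. a < r} = {}" "{a\<in>{c,c'}. a < c} = {}"
    "{a\<in>{r,r'}. a < r'} = {r}" "{a\<in>{c,c'}. a < c'} = {c}" using r c by auto
  have "?A2 \<in> carrier_mat 2 2"
    using r c by (intro carrier_matI, unfold dim_submatrix rows cols, simp_all)
  moreover have "?A2 $$ (0,0) = A $$ (r,c)" "?A2 $$ (0,1) = A $$ (r,c')"
    "?A2 $$ (1,0) = A $$ (r',c)" "?A2 $$ (1,1) = A $$ (r',c')"
    using submatrix_index_card[of r A c "{r,r'}" "{c,c'}", unfolded before]
      submatrix_index_card[of r A c' "{r,r'}" "{c,c'}", unfolded before]
      submatrix_index_card[of r' A c "{r,r'}" "{c,c'}", unfolded before]
      submatrix_index_card[of r' A c' "{r,r'}" "{c,c'}", unfolded before] A r c by simp_all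
  ultimately have "det ?A2 \<noteq> 0" using ne by (simp add: det_2x2)
  from vec_space.rank_gt_minor[OF A this] have "card {c,c'} \<le> vec_space.rank N A"
    unfolding cols[unfolded carrier_matD(2)[OF A]] .
  thus False using rk c by simp
qed

lemma rank_le_1_minor_eq:
  fixes A :: "'a::field mat"
  assumes A: "A \<in> carrier_mat N M" and r: "r < N" "r' < N" and c: "c < M" "c' < M"
    and rk: "vec_space.rank N A \<le> 1"
  shows "A $$ (r,c) * A $$ (r',c') = A $$ (r,c') * A $$ (r',c)"
proof -
  note ordered = rank_le_1_ordered_minor_eq[OF A _ _ _ _ rk]
  consider "r = r' \<or> c = c'" | "r < r'" "c < c'" | "r < r'" "c' < c" | "r' < r" "c < c'" | "r' < r" "c' < c"
    by linarith
  then show ?thesis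
  proof cases
    case 1
    then show ?thesis by (metis mult.commute)
  next
    case 2
    then show ?thesis using ordered[of r r' c c'] r c by simp
  next
    case 3
    then show ?thesis using ordered[of r r' c' c] r c by simp
  next
    case 4
    then show ?thesis using ordered[of r' r c c'] r c by (simp add: mult.commute)
  next
    case 5
    then show ?thesis using ordered[of r' r c' c] r c by (simp add: mult.commute)
  qed
qed

lemma rank_1_imp_product_entries:
  fixes A :: "'a::field mat"
  assumes A: "A \<in> carrier_mat N M" and rk: "vec_space.rank N A = 1"
  obtains f g where "\<And>r c. r < N \<Longrightarrow> c < M \<Longrightarrow> A $$ (r,c) = f r * g c"
proof -
  have "\<exists>r0<N. \<exists>c0<M. A $$ (r0,c0) \<noteq> 0"
  proof (rule ccontr)
    assume "\<not> ?thesis"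
    then have "A = 0\<^sub>m N M" using A by (intro eq_matI) auto
    moreover have "vec_space.rank N (0\<^sub>m N M :: 'a mat) = 0" by (rule vec_space.rank_0I)
    ultimately show False using rk by simp
  qed
  then obtain r0 c0 where r0: "r0 < N" and c0: "c0 < M" and nz: "A $$ (r0,c0) \<noteq> 0" by blast
  show thesis
  proof (rule that)
    fix r c assume r: "r < N" and c: "c < M"
    have "A $$ (r,c) * A $$ (r0,c0) = A $$ (r,c0) * A $$ (r0,c)"
      using rank_le_1_minor_eq[OF A r r0 c c0] rk by simp
    then show "A $$ (r,c) = A $$ (r,c0) * (A $$ (r0,c) / A $$ (r0,c0))"
      using nz by (simp add: field_simps)
  qed
qed

lemma mult_mat_triple_index:
  fixes A :: "'a::comm_semiring_0 mat"
  assumes "A \<in> carrier_mat n k" "C \<in> carrier_mat k l" "D \<in> carrier_mat l r" "p < n" "q < r"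
  shows "(A * C * D) $$ (p,q) = (\<Sum>i<k. \<Sum>j<l. A $$ (p,i) * C $$ (i,j) * D $$ (j,q))"
  using assms by (simp add: scalar_prod_def sum_distrib_left lessThan_atLeast0 mult.assoc)

text \<open>Since U W = I, M = U (W M U) W.\<close>
lemma right_inverse_expansion:
  fixes U :: "'a::comm_ring_1 mat"
  assumes U: "U \<in> carrier_mat n m" and W: "W \<in> carrier_mat m n" and UW: "U * W = 1\<^sub>m n"
    and M: "M \<in> carrier_mat n n" and p: "p < n" and q: "q < n"
  shows "M $$ (p,q) = (\<Sum>i<m. \<Sum>j<m. (W * M * U) $$ (i,j) * (U $$ (p,i) * W $$ (j,q)))"
proof -
  have WM: "W * M \<in> carrier_mat m n" and WMU: "W * M * U \<in> carrier_mat m m"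
    using U W M by auto
  have "U * (W * M * U) = U * (W * M) * U"
    by (rule assoc_mult_mat[OF U WM U, symmetric])
  also have "\<dots> = M * U"
    unfolding assoc_mult_mat[OF U W M, symmetric] UW using M by simp
  finally have "U * (W * M * U) * W = M * U * W" by simp
  also have "\<dots> = M"
    unfolding assoc_mult_mat[OF M U W] UW using M by simp
  finally have "M $$ (p,q) = (U * (W * M * U) * W) $$ (p,q)" by simp
  also have "\<dots> = (\<Sum>i<m. \<Sum>j<m. U $$ (p,i) * (W * M * U) $$ (i,j) * W $$ (j,q))"
    by (rule mult_mat_triple_index[OF U WMU W p q])
  finally show ?thesis by (simp add: mult_ac)
qed

lemma block_offset_less:
  fixes i a m n :: nat
  assumes "i < m" and "a < n"
  shows "i * n + a < m * n"
proof -
  have "Suc i * n \<le> m * n" using assms(1) by (intro mult_le_mono1) simp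
  then show ?thesis using assms(2) by simp
qed

lemma block_index [simp]: "p < n \<Longrightarrow> q < n \<Longrightarrow> block n B i j $$ (p,q) = B $$ (i*n + p, j*n + q)"
  by (simp add: block_def)

lemma block_carrier: "block n B i j \<in> carrier_mat n n"
  by (simp add: block_def)

lemma diag_block_sum_index:
  "p < n \<Longrightarrow> q < n \<Longrightarrow> diag_block_sum n m B $$ (p,q) = (\<Sum>i<m. B $$ (i*n + p, i*n + q))"
  by (simp add: diag_block_sum_def)

lemma diag_block_sum_one_imp_rank_ge_1:
  assumes n: "0 < n" and B: "B \<in> carrier_mat (m*n) (m*n)" and diag: "diag_block_sum n m B = 1\<^sub>m n"
  shows "1 \<le> crank B"
proof -
  have "(\<Sum>i<m. B $$ (i*n, i*n)) = 1"
    using diag_block_sum_index[of 0 n 0 m B] diag n by simp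
  then obtain i where i: "i < m" and nz: "B $$ (i*n, i*n) \<noteq> 0"
    by (metis (mono_tags, lifting) sum.neutral lessThan_iff zero_neq_one)
  have "i*n < m*n" using block_offset_less[OF i n] by simp
  from nonzero_entry_imp_rank_ge_1[OF B this this nz] show ?thesis
    using B by (simp add: crank_def)
qed

lemma haemers_eq_1_iff:
  assumes n: "0 < n" and one: "1\<^sub>m n \<in> S"
  shows "haemers n S = 1 \<longleftrightarrow>
    (\<exists>m B. m \<ge> 1 \<and> in_block_space n m S B \<and> diag_block_sum n m B = 1\<^sub>m n \<and> crank B = 1)"
proof -
  let ?P = "\<lambda>r. \<exists>m B. m \<ge> 1 \<and> in_block_space n m S B \<and> diag_block_sum n m B = 1\<^sub>m n \<and> crank B = r"
  have haemers: "haemers n S = (LEAST r. ?P r)" by (simp add: haemers_def)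
  have pos: "1 \<le> r" if "?P r" for r
    using that diag_block_sum_one_imp_rank_ge_1[OF n] by (auto simp: in_block_space_def)
  have "block n (1\<^sub>m n) 0 0 = 1\<^sub>m n" by (intro eq_matI) (auto simp: block_def)
  then have "?P (crank (1\<^sub>m n))"
    using one by (intro exI[of _ 1] exI[of _ "1\<^sub>m n"])
      (auto simp: in_block_space_def diag_block_sum_def block_def)
  then have least: "?P (haemers n S)" unfolding haemers by (rule LeastI)
  show ?thesis
  proof
    assume "haemers n S = 1"
    with least show "?P 1" by simp
  next
    assume "?P 1"
    then show "haemers n S = 1" unfolding haemers using pos by (intro Least_equality) auto
  qed
qed

lemma rank_1_block_factorization:
  assumes B: "B \<in> carrier_mat (m*n) (m*n)" and rk: "crank B = 1"
  obtains U W where "U \<in> carrier_mat n m" "W \<in> carrier_mat m n"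
    "\<And>i j. i < m \<Longrightarrow> j < m \<Longrightarrow> block n B i j = mat n n (\<lambda>(p,q). U $$ (p,i) * W $$ (j,q))"
    "diag_block_sum n m B = U * W"
proof -
  obtain f g where fg: "\<And>r c. r < m*n \<Longrightarrow> c < m*n \<Longrightarrow> B $$ (r,c) = f r * g c"
    using rank_1_imp_product_entries[OF B] rk B unfolding crank_def by auto
  define U where "U = mat n m (\<lambda>(p,i). f (i*n + p))"
  define W where "W = mat m n (\<lambda>(j,q). g (j*n + q))"
  show thesis
  proof (rule that)
    show "U \<in> carrier_mat n m" "W \<in> carrier_mat m n" by (simp_all add: U_def W_def)
    show "block n B i j = mat n n (\<lambda>(p,q). U $$ (p,i) * W $$ (j,q))" if "i < m" "j < m" for i j
      using that by (intro eq_matI) (simp_all add: U_def W_def fg block_offset_less block_def)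
    show "diag_block_sum n m B = U * W"
      by (intro eq_matI)
        (simp_all add: diag_block_sum_def U_def W_def fg block_offset_less scalar_prod_def
          lessThan_atLeast0)
  qed
qed

lemma mat_sum_mem:
  assumes zero: "0\<^sub>m n n \<in> S" and add: "\<And>A B. A \<in> S \<Longrightarrow> B \<in> S \<Longrightarrow> A + B \<in> S"
    and S: "S \<subseteq> carrier_mat n n" and "finite I" and "\<And>x. x \<in> I \<Longrightarrow> F x \<in> S"
  shows "mat n n (\<lambda>(p,q). \<Sum>x\<in>I. F x $$ (p,q)) \<in> S"
  using \<open>finite I\<close> \<open>\<And>x. x \<in> I \<Longrightarrow> F x \<in> S\<close>
proof (induction I rule: finite_induct)
  case empty
  then show ?case using zero by (simp add: zero_mat_def)
next
  case (insert y I)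
  have y: "F y \<in> S" and I: "mat n n (\<lambda>(p,q). \<Sum>x\<in>I. F x $$ (p,q)) \<in> S"
    using insert.IH insert.prems by blast+
  have insert_split: "mat n n (\<lambda>(p,q). \<Sum>x\<in>insert y I. F x $$ (p,q))
      = F y + mat n n (\<lambda>(p,q). \<Sum>x\<in>I. F x $$ (p,q))"
    using y S insert.hyps by (intro eq_matI) auto
  show ?case unfolding insert_split by (rule add[OF y I])
qed

lemma rank_1_witness_imp_full_space:
  assumes G: "nc_graph n S" and inb: "in_block_space n m S B"
    and diag: "diag_block_sum n m B = 1\<^sub>m n" and rk: "crank B = 1"
  shows "S = carrier_mat n n"
proof
  show "S \<subseteq> carrier_mat n n" using G by (simp add: nc_graph_def)
  obtain U W where U: "U \<in> carrier_mat n m" and W: "W \<in> carrier_mat m n"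
    and blk: "\<And>i j. i < m \<Longrightarrow> j < m \<Longrightarrow> block n B i j = mat n n (\<lambda>(p,q). U $$ (p,i) * W $$ (j,q))"
    and UW: "diag_block_sum n m B = U * W"
    using rank_1_block_factorization inb rk unfolding in_block_space_def by metis
  show "carrier_mat n n \<subseteq> S"
  proof
    fix M :: "complex mat" assume M: "M \<in> carrier_mat n n"
    define F where "F = (\<lambda>(i,j). (W * M * U) $$ (i,j) \<cdot>\<^sub>m block n B i j)"
    have "mat n n (\<lambda>(p,q). \<Sum>x\<in>{..<m} \<times> {..<m}. F x $$ (p,q)) \<in> S"
      by (rule mat_sum_mem) (use G inb in \<open>auto simp: nc_graph_def in_block_space_def F_def\<close>)
    moreover have "mat n n (\<lambda>(p,q). \<Sum>x\<in>{..<m} \<times> {..<m}. F x $$ (p,q)) = M"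
    proof (rule eq_matI)
      fix p q assume "p < dim_row M" "q < dim_col M"
      then have p: "p < n" and q: "q < n" using M by auto
      have "(\<Sum>x\<in>{..<m} \<times> {..<m}. F x $$ (p,q)) = (\<Sum>i<m. \<Sum>j<m. F (i,j) $$ (p,q))"
        by (simp add: sum.cartesian_product)
      also have "\<dots> = (\<Sum>i<m. \<Sum>j<m. (W * M * U) $$ (i,j) * (U $$ (p,i) * W $$ (j,q)))"
        using p q by (simp add: F_def blk)
      also have "\<dots> = M $$ (p,q)"
        using right_inverse_expansion[OF U W _ M p q] diag UW by simp
      finally show "mat n n (\<lambda>(p,q). \<Sum>x\<in>{..<m} \<times> {..<m}. F x $$ (p,q)) $$ (p,q) = M $$ (p,q)"
        using p q by simp
    qed (use M in auto)
    ultimately show "M \<in> S" by simp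
  qed
qed

lemma full_space_rank_1_witness:
  assumes "0 < n"
  obtains B where "in_block_space n n (carrier_mat n n) B" "diag_block_sum n n B = 1\<^sub>m n" "crank B = 1"
proof
  define h where "h x = (if x div n = x mod n then 1 else 0 :: complex)" for x
  \<comment> \<open>vec(I) in the coordinates x = i*n + p; the (i,j) block of h h^T is the matrix unit E_ij\<close>
  define B where "B = mat (n*n) (n*n) (\<lambda>(x,y). h x * h y)"
  have B: "B \<in> carrier_mat (n*n) (n*n)" by (simp add: B_def)
  show "in_block_space n n (carrier_mat n n) B"
    using B by (simp add: in_block_space_def block_carrier)
  show "diag_block_sum n n B = 1\<^sub>m n"
  proof (rule eq_matI)
    fix p q assume "p < dim_row (1\<^sub>m n)" "q < dim_col (1\<^sub>m n)"
    then have p: "p < n" and q: "q < n" by auto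
    have "diag_block_sum n n B $$ (p,q) = (\<Sum>i<n. (if i = p then 1 else 0) * (if i = q then 1 else 0))"
      using p q by (simp add: diag_block_sum_index B_def h_def block_offset_less)
    also have "\<dots> = 1\<^sub>m n $$ (p,q)" using p q by (simp add: if_distrib cong: if_cong)
    finally show "diag_block_sum n n B $$ (p,q) = 1\<^sub>m n $$ (p,q)" .
  qed (simp_all add: diag_block_sum_def)
  have "vec_space.rank (n*n) B \<le> 1"
    by (rule vec_space.rank_le_1_product_entries[OF B, of h h]) (simp add: B_def)
  moreover have "1 \<le> vec_space.rank (n*n) B"
    using nonzero_entry_imp_rank_ge_1[OF B, of 0 0] assms by (simp add: B_def h_def)
  ultimately show "crank B = 1" using B by (simp add: crank_def)
qed

theorem mainTheorem9:
  fixes n :: nat and S :: "complex mat set"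
  assumes "n \<ge> 1" and "nc_graph n S"
  shows "haemers n S = 1 \<longleftrightarrow> S = carrier_mat n n"
proof -
  have n: "0 < n" using assms(1) by simp
  have "1\<^sub>m n \<in> S" using assms(2) by (simp add: nc_graph_def)
  note haemers_1 = haemers_eq_1_iff[OF n this]
  show ?thesis
  proof
    assume "haemers n S = 1"
    then show "S = carrier_mat n n"
      using haemers_1 rank_1_witness_imp_full_space[OF assms(2)] by blast
  next
    assume full: "S = carrier_mat n n"
    obtain B where "in_block_space n n S B" "diag_block_sum n n B = 1\<^sub>m n" "crank B = 1"
      using full_space_rank_1_witness[OF n] unfolding full by blast
    then show "haemers n S = 1" using haemers_1 assms(1) by blast
  qed
qed

end
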